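(* Let $k$ be a field, $V$ an $n$-dimensional $k$-vector space, $S=\operatorname{Sym}V=k[x_1,\dots,x_n]$. If $f\in S_{d+1}$ is an LDS form of degree $d+1\geq 3$, then $f$ is not GIT semistable with respect to the standard action of $\mathrm{SL}(n)=\mathrm{SL}(V)$ on $S_{d+1}$.
   Context: A form $f\in S_{d+1}$ is called an LDS form if, after a linear change of variables, it can be written as $f(x_1,\dots,x_n)=\sum_{i=1}^{\ell} x_i\,\frac{\partial H(x_{\ell+1},\dots,x_{2\ell})}{\partial x_{\ell+i}}+G(x_{\ell+1},\dots,x_n)$, where $H$ and $G$ are forms of degree $d+1$ in $\ell$ and $n-\ell$ variables respectively. *)

theory Defs
  imports "HOL-Analysis.Analysis" "HOL-Library.Poly_Mapping"
    "HOL-Computational_Algebra.Polynomial" "HOL-Computational_Algebra.Fraction_Field"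
begin

text \<open>Multivariate polynomials in variables indexed by 'v with coefficients in 'a,
  represented as finitely supported maps from monomials (exponent vectors) to coefficients.\<close>
type_synonym ('v, 'a) mpoly = "('v \<Rightarrow>\<^sub>0 nat) \<Rightarrow>\<^sub>0 'a"

definition mdeg :: "('v \<Rightarrow>\<^sub>0 nat) \<Rightarrow> nat" where
  "mdeg m = (\<Sum>i\<in>Poly_Mapping.keys m. Poly_Mapping.lookup m i)"

definition homogeneous :: "nat \<Rightarrow> ('v, 'a::zero) mpoly \<Rightarrow> bool" where
  "homogeneous D p \<longleftrightarrow> (\<forall>m\<in>Poly_Mapping.keys p. mdeg m = D)"

definition vars_in :: "'v set \<Rightarrow> ('v, 'a::zero) mpoly \<Rightarrow> bool" where
  "vars_in A p \<longleftrightarrow> (\<forall>m\<in>Poly_Mapping.keys p. Poly_Mapping.keys m \<subseteq> A)"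

definition mvar :: "'v \<Rightarrow> ('v, 'a::{zero,one}) mpoly" where
  "mvar i = Poly_Mapping.single (Poly_Mapping.single i 1) 1"

definition mconst :: "'a::zero \<Rightarrow> ('v, 'a) mpoly" where
  "mconst c = Poly_Mapping.single 0 c"

definition pderiv_var :: "'v \<Rightarrow> ('v, 'a::comm_ring_1) mpoly \<Rightarrow> ('v, 'a) mpoly" where
  "pderiv_var j p = (\<Sum>m\<in>Poly_Mapping.keys p.
      Poly_Mapping.single (m - Poly_Mapping.single j 1) (of_nat (Poly_Mapping.lookup m j) * Poly_Mapping.lookup p m))"

definition msubst :: "('v \<Rightarrow> ('w, 'a::comm_ring_1) mpoly) \<Rightarrow> ('v, 'a) mpoly \<Rightarrow> ('w, 'a) mpoly" where
  "msubst s p = (\<Sum>m\<in>Poly_Mapping.keys p. mconst (Poly_Mapping.lookup p m) * (\<Prod>i\<in>Poly_Mapping.keys m. s i ^ Poly_Mapping.lookup m i))"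

definition lin_change :: "'a::comm_ring_1 ^ 'n::finite ^ 'n \<Rightarrow> ('n, 'a) mpoly \<Rightarrow> ('n, 'a) mpoly" where
  "lin_change g p = msubst (\<lambda>i. \<Sum>j\<in>UNIV. mconst (g $ i $ j) * mvar j) p"

text \<open>LDS forms of degree D in the variables indexed by the finite type 'n (n = CARD('n)).
  The enumeration e identifies the variables with x_1,...,x_n (x_{i+1} = e i).\<close>
definition LDS :: "nat \<Rightarrow> ('n::finite, 'a::field) mpoly \<Rightarrow> bool" where
  "LDS D f \<longleftrightarrow> (\<exists>(h :: 'a ^ 'n ^ 'n) (e :: nat \<Rightarrow> 'n) (l :: nat) H G.
     det h \<noteq> 0 \<and> bij_betw e {..<CARD('n)} UNIV \<and> 1 \<le> l \<and> 2 * l \<le> CARD('n) \<and>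
     homogeneous D H \<and> vars_in (e ` {l..<2*l}) H \<and>
     homogeneous D G \<and> vars_in (e ` {l..<CARD('n)}) G \<and>
     lin_change h f = (\<Sum>i<l. mvar (e i) * pderiv_var (e (l + i)) H) + G)"

text \<open>The infinite field K = k(t) of rational functions over k, used to test
  SL(n)-invariance as a polynomial identity (SL(n,K) is Zariski dense for infinite K).\<close>
type_synonym 'a ratfun = "'a poly fract"

definition emb :: "'a::field \<Rightarrow> 'a ratfun" where
  "emb a = Fract [:a:] 1"

text \<open>Evaluation of a polynomial F in the coefficients c_m of a form (variables indexed by
  monomials m), at a coefficient vector c with values in K.\<close>
definition eval_coeff :: "('n \<Rightarrow>\<^sub>0 nat, 'a::field) mpoly \<Rightarrow> (('n \<Rightarrow>\<^sub>0 nat) \<Rightarrow> 'a ratfun) \<Rightarrow> 'a ratfun" where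
  "eval_coeff F c = (\<Sum>\<mu>\<in>Poly_Mapping.keys F. emb (Poly_Mapping.lookup F \<mu>) * (\<Prod>m\<in>Poly_Mapping.keys \<mu>. c m ^ Poly_Mapping.lookup \<mu> m))"

definition SL_invariant :: "nat \<Rightarrow> ('n::finite \<Rightarrow>\<^sub>0 nat, 'a::field) mpoly \<Rightarrow> bool" where
  "SL_invariant D F \<longleftrightarrow> (\<forall>(g :: 'a ratfun ^ 'n ^ 'n) (\<phi> :: ('n, 'a ratfun) mpoly).
      det g = 1 \<longrightarrow> homogeneous D \<phi> \<longrightarrow>
      eval_coeff F (Poly_Mapping.lookup (lin_change g \<phi>)) = eval_coeff F (Poly_Mapping.lookup \<phi>))"

definition GIT_semistable :: "nat \<Rightarrow> ('n::finite, 'a::field) mpoly \<Rightarrow> bool" where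
  "GIT_semistable D f \<longleftrightarrow> (\<exists>F e. 0 < e \<and> homogeneous e F \<and> SL_invariant D F \<and>
      eval_coeff F (Poly_Mapping.lookup (Poly_Mapping.map emb f)) \<noteq> 0)"

end

theory Submission imports Defs
begin

text \<open>The easy half of the Hilbert--Mumford criterion. After the change of variables h, an
  LDS form is a sum of monomials that are all of positive weight for the weight vector
  w = (2l - 2n, \<dots>, 2l - 2n, n, \<dots>, n, l, \<dots>, l) (blocks of sizes l, l, n - 2l), whose entries
  add up to 0. Hence g(t) = h \<cdot> diag(\<kappa>_j t^w_j), with constants \<kappa>_j making det g = 1, lies in SL(n, k(t))
  and g(t) \<cdot> f has all its coefficients divisible by t. An invariant F of positive degree
  then satisfies F(f) = F(g(t) \<cdot> f), a polynomial in t vanishing at t = 0, so F(f) = 0.\<close>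

definition to_fract :: "'a::idom \<Rightarrow> 'a fract" where
  "to_fract x = Fract x 1"

lemma to_fract_0 [simp]: "to_fract 0 = 0"
  by (simp add: to_fract_def Zero_fract_def)

lemma to_fract_1 [simp]: "to_fract 1 = 1"
  by (simp add: to_fract_def One_fract_def)

lemma to_fract_add [simp]: "to_fract (x + y) = to_fract x + to_fract y"
  by (simp add: to_fract_def)

lemma to_fract_mult [simp]: "to_fract (x * y) = to_fract x * to_fract y"
  by (simp add: to_fract_def)

lemma to_fract_uminus [simp]: "to_fract (- x) = - to_fract x"
  by (simp add: to_fract_def)

lemma to_fract_eq_iff [simp]: "to_fract x = to_fract y \<longleftrightarrow> x = y"
  by (simp add: to_fract_def eq_fract)

lemma to_fract_eq_0_iff [simp]: "to_fract x = 0 \<longleftrightarrow> x = 0"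
  using to_fract_eq_iff[of x 0] by simp

lemma to_fract_sum: "to_fract (sum f A) = (\<Sum>x\<in>A. to_fract (f x))"
  by (induction A rule: infinite_finite_induct) auto

lemma to_fract_prod: "to_fract (prod f A) = (\<Prod>x\<in>A. to_fract (f x))"
  by (induction A rule: infinite_finite_induct) auto

lemma to_fract_power: "to_fract (a ^ n) = to_fract a ^ n"
  by (induction n) auto

lemma emb_eq_to_fract: "emb a = to_fract [:a:]"
  by (simp add: emb_def to_fract_def)

lemma emb_0 [simp]: "emb 0 = 0"
  by (simp add: emb_eq_to_fract)

lemma emb_1 [simp]: "emb 1 = 1"
  by (simp add: emb_eq_to_fract one_pCons[symmetric])

lemma emb_eq_0_iff [simp]: "emb a = 0 \<longleftrightarrow> a = 0"
  by (simp add: emb_eq_to_fract)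

lemma emb_add: "emb (a + b) = emb a + emb b"
  by (simp only: emb_eq_to_fract to_fract_add[symmetric]) simp

lemma emb_mult: "emb (a * b) = emb a * emb b"
  by (simp only: emb_eq_to_fract to_fract_mult[symmetric]) simp

lemma emb_uminus: "emb (- a) = - emb a"
  by (simp only: emb_eq_to_fract to_fract_uminus[symmetric]) simp

lemma emb_sum: "emb (sum f A) = (\<Sum>x\<in>A. emb (f x))"
  by (induction A rule: infinite_finite_induct) (auto simp: emb_add)

lemma emb_prod: "emb (prod f A) = (\<Prod>x\<in>A. emb (f x))"
  by (induction A rule: infinite_finite_induct) (auto simp: emb_mult)

lemma emb_power: "emb (a ^ n) = emb a ^ n"
  by (induction n) (auto simp: emb_mult)

lemma emb_of_int: "emb (of_int z) = of_int z"
proof -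
  have "emb (of_nat n) = of_nat n" for n
    by (induction n) (auto simp: emb_add)
  then show ?thesis
    by (cases z rule: int_cases) (auto simp: emb_uminus simp del: of_nat_Suc)
qed

lemma lookup_map_emb: "Poly_Mapping.lookup (Poly_Mapping.map emb p) m = emb (Poly_Mapping.lookup p m)"
  by (simp add: map.rep_eq when_def)

lemma keys_map_emb: "Poly_Mapping.keys (Poly_Mapping.map emb p) = Poly_Mapping.keys p"
  by (auto simp: in_keys_iff lookup_map_emb)

lemma det_map_emb: "det (\<chi> i j. emb (h $ i $ j)) = emb (det h)"
  unfolding det_def by (simp add: emb_sum emb_mult emb_prod emb_of_int)

lemma det_map_emb_mult_columns:
  "det (\<chi> i j. emb (h $ i $ j) * c j) = emb (det h) * (\<Prod>j\<in>UNIV. c j)"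
proof -
  have "det (\<chi> i j. emb (h $ i $ j) * c j) = det (transpose (\<chi> i j. emb (h $ i $ j) * c j))"
    by (simp add: det_transpose)
  also have "transpose (\<chi> i j. emb (h $ i $ j) * c j) = (\<chi> i. c i *s (\<chi> j. emb (h $ j $ i)))"
    by (simp add: transpose_def vec_eq_iff mult.commute)
  also have "det \<dots> = (\<Prod>j\<in>UNIV. c j) * det (\<chi> i j. emb (h $ j $ i))"
    by (rule det_rows_mul)
  also have "(\<chi> i j. emb (h $ j $ i)) = transpose (\<chi> i j. emb (h $ i $ j))"
    by (simp add: transpose_def)
  finally show ?thesis
    by (simp add: det_transpose det_map_emb mult.commute)
qed

lemma eval_coeff_map_emb:
  "eval_coeff F (\<lambda>m. emb (v m)) = emb (\<Sum>\<mu>\<in>Poly_Mapping.keys F. Poly_Mapping.lookup F \<mu> *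
     (\<Prod>m\<in>Poly_Mapping.keys \<mu>. v m ^ Poly_Mapping.lookup \<mu> m))"
  by (simp add: eval_coeff_def emb_sum emb_prod emb_power emb_mult)

lemma eval_coeff_vanishing_at_0:
  assumes "homogeneous e F" "0 < e"
    and "\<And>m. c m = to_fract (P m)" "\<And>m. poly (P m) 0 = 0"
  obtains R where "eval_coeff F c = to_fract R" "poly R 0 = 0"
proof
  define R where "R = (\<Sum>\<mu>\<in>Poly_Mapping.keys F. [:Poly_Mapping.lookup F \<mu>:] *
     (\<Prod>m\<in>Poly_Mapping.keys \<mu>. P m ^ Poly_Mapping.lookup \<mu> m))"
  show "eval_coeff F c = to_fract R"
    by (simp only: R_def eval_coeff_def assms(3) to_fract_sum to_fract_mult to_fract_prod
        to_fract_power emb_eq_to_fract)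
  have "(\<Prod>m\<in>Poly_Mapping.keys \<mu>. poly (P m) 0 ^ Poly_Mapping.lookup \<mu> m) = 0"
    if "\<mu> \<in> Poly_Mapping.keys F" for \<mu>
  proof -
    have "mdeg \<mu> = e"
      using assms(1) that by (simp add: homogeneous_def)
    with \<open>0 < e\<close> have "Poly_Mapping.keys \<mu> \<noteq> {}"
      by (auto simp: mdeg_def)
    then obtain m where m: "m \<in> Poly_Mapping.keys \<mu>"
      by blast
    then have "poly (P m) 0 ^ Poly_Mapping.lookup \<mu> m = 0"
      using assms(4) by (simp add: in_keys_iff zero_power)
    with m show ?thesis
      by (intro prod_zero) auto
  qed
  then show "poly R 0 = 0"
    unfolding R_def poly_sum poly_mult poly_prod poly_power by (intro sum.neutral) simp
qed

section \<open>Weights of monomials\<close>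

definition weight :: "('n::finite \<Rightarrow> int) \<Rightarrow> ('n \<Rightarrow>\<^sub>0 nat) \<Rightarrow> int" where
  "weight w m = (\<Sum>j\<in>UNIV. w j * int (Poly_Mapping.lookup m j))"

lemma weight_add: "weight w (a + b) = weight w a + weight w b"
  by (simp add: weight_def lookup_add sum.distrib distrib_left)

lemma weight_single: "weight w (Poly_Mapping.single j 1) = w j"
proof -
  have "(\<Sum>i\<in>UNIV. w i * int (Poly_Mapping.lookup (Poly_Mapping.single j 1) i)) =
      (\<Sum>i\<in>UNIV. if i = j then w j else 0)"
    by (rule sum.cong) (auto simp: lookup_single when_def)
  then show ?thesis
    by (simp add: weight_def)
qed

lemma weight_minus_single:
  assumes "Poly_Mapping.lookup m j \<noteq> 0"
  shows "weight w (m - Poly_Mapping.single j 1) = weight w m - w j"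
proof -
  have "m = (m - Poly_Mapping.single j 1) + Poly_Mapping.single j 1"
    using assms by (intro poly_mapping_eqI) (auto simp: lookup_add lookup_minus lookup_single when_def)
  then have "weight w m = weight w (m - Poly_Mapping.single j 1) + w j"
    by (metis weight_add weight_single)
  then show ?thesis
    by simp
qed

lemma weight_eq_sum_keys: "weight w m = (\<Sum>j\<in>Poly_Mapping.keys m. w j * int (Poly_Mapping.lookup m j))"
  unfolding weight_def by (rule sum.mono_neutral_right) (auto simp: in_keys_iff)

lemma weight_eq_mult_mdeg:
  assumes "Poly_Mapping.keys m \<subseteq> S" "\<And>j. j \<in> S \<Longrightarrow> w j = b"
  shows "weight w m = b * int (mdeg m)"
proof -
  have "weight w m = (\<Sum>j\<in>Poly_Mapping.keys m. b * int (Poly_Mapping.lookup m j))"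
    unfolding weight_eq_sum_keys using assms by (intro sum.cong) auto
  then show ?thesis
    by (simp add: mdeg_def sum_distrib_left)
qed

lemma mdeg_le_weight:
  assumes "Poly_Mapping.keys m \<subseteq> S" "\<And>j. j \<in> S \<Longrightarrow> 1 \<le> w j"
  shows "int (mdeg m) \<le> weight w m"
proof -
  have "(\<Sum>j\<in>Poly_Mapping.keys m. int (Poly_Mapping.lookup m j)) \<le>
      (\<Sum>j\<in>Poly_Mapping.keys m. w j * int (Poly_Mapping.lookup m j))"
    using assms by (intro sum_mono) (auto simp: mult_le_cancel_right1)
  then show ?thesis
    by (simp add: weight_eq_sum_keys mdeg_def)
qed

lemma prod_power_int:
  assumes "(t :: 'a::field) \<noteq> 0"
  shows "(\<Prod>x\<in>A. t powi f x) = t powi (\<Sum>x\<in>A. f x)"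
  by (induction A rule: infinite_finite_induct) (auto simp: power_int_add assms)

definition monomial_value :: "('n::finite \<Rightarrow> 'b::comm_ring_1) \<Rightarrow> ('n \<Rightarrow>\<^sub>0 nat) \<Rightarrow> 'b" where
  "monomial_value c m = (\<Prod>j\<in>UNIV. c j ^ Poly_Mapping.lookup m j)"

lemma monomial_value_add: "monomial_value c (m + m') = monomial_value c m * monomial_value c m'"
  by (simp add: monomial_value_def lookup_add power_add prod.distrib)

lemma monomial_value_0 [simp]: "monomial_value c 0 = 1"
  by (simp add: monomial_value_def)

lemma monomial_value_single: "monomial_value c (Poly_Mapping.single j 1) = c j"
proof -
  have "(\<Prod>i\<in>UNIV. c i ^ Poly_Mapping.lookup (Poly_Mapping.single j 1) i) =
      (\<Prod>i\<in>UNIV. if i = j then c j else 1)"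
    by (rule prod.cong) (auto simp: lookup_single when_def)
  then show ?thesis
    by (simp add: monomial_value_def)
qed

lemma monomial_value_one_parameter:
  assumes "t \<noteq> 0"
  shows "monomial_value (\<lambda>j. emb (\<kappa> j) * t powi w j) m = emb (monomial_value \<kappa> m) * t powi weight w m"
proof -
  have "monomial_value (\<lambda>j. emb (\<kappa> j) * t powi w j) m =
      (\<Prod>j\<in>UNIV. emb (\<kappa> j ^ Poly_Mapping.lookup m j) * t powi (w j * int (Poly_Mapping.lookup m j)))"
    unfolding monomial_value_def
    by (intro prod.cong) (auto simp: power_mult_distrib emb_power power_int_power')
  also have "\<dots> = emb (monomial_value \<kappa> m) * t powi weight w m"
    by (simp add: prod.distrib emb_prod prod_power_int[OF assms] weight_def monomial_value_def)
  finally show ?thesis .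
qed

text \<open>Base change to k(t) followed by the substitution x_j \<mapsto> c_j x_j.\<close>

definition scale_vars :: "('n::finite \<Rightarrow> 'k::field ratfun) \<Rightarrow> ('n, 'k) mpoly \<Rightarrow> ('n, 'k ratfun) mpoly" where
  "scale_vars c p = Poly_Mapping.mapp (\<lambda>m a. emb a * monomial_value c m) p"

lemma lookup_scale_vars:
  "Poly_Mapping.lookup (scale_vars c p) m = emb (Poly_Mapping.lookup p m) * monomial_value c m"
  by (auto simp: scale_vars_def lookup_mapp when_def in_keys_iff)

lemma scale_vars_add: "scale_vars c (p + q) = scale_vars c p + scale_vars c q"
  by (rule poly_mapping_eqI) (simp add: lookup_scale_vars lookup_add emb_add distrib_right)

lemma scale_vars_single:
  "scale_vars c (Poly_Mapping.single m a) = Poly_Mapping.single m (emb a * monomial_value c m)"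
  by (rule poly_mapping_eqI) (simp add: lookup_scale_vars lookup_single when_def)

lemma scale_vars_0 [simp]: "scale_vars c 0 = 0"
  by (rule poly_mapping_eqI) (simp add: lookup_scale_vars)

lemma scale_vars_sum: "scale_vars c (sum f A) = (\<Sum>x\<in>A. scale_vars c (f x))"
  by (induction A rule: infinite_finite_induct) (auto simp: scale_vars_add)

lemma sum_single_lookup: "(\<Sum>m\<in>Poly_Mapping.keys p. Poly_Mapping.single m (Poly_Mapping.lookup p m)) = p"
  by (rule poly_mapping_eqI) (simp add: lookup_sum lookup_single when_def in_keys_iff)

lemma scale_vars_eq_sum:
  "scale_vars c p = (\<Sum>m\<in>Poly_Mapping.keys p. Poly_Mapping.single m (emb (Poly_Mapping.lookup p m) * monomial_value c m))"
  by (subst (1) sum_single_lookup[of p, symmetric]) (simp only: scale_vars_sum scale_vars_single)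

lemma scale_vars_mult: "scale_vars c (p * q) = scale_vars c p * scale_vars c q"
proof -
  have "p * q = (\<Sum>m\<in>Poly_Mapping.keys p. \<Sum>m'\<in>Poly_Mapping.keys q.
       Poly_Mapping.single (m + m') (Poly_Mapping.lookup p m * Poly_Mapping.lookup q m'))"
    by (subst (1 2) sum_single_lookup[symmetric]) (simp only: sum_product mult_single)
  then have "scale_vars c (p * q) = (\<Sum>m\<in>Poly_Mapping.keys p. \<Sum>m'\<in>Poly_Mapping.keys q.
       Poly_Mapping.single (m + m') (emb (Poly_Mapping.lookup p m * Poly_Mapping.lookup q m') * monomial_value c (m + m')))"
    by (simp only: scale_vars_sum scale_vars_single)
  moreover have "scale_vars c p * scale_vars c q = (\<Sum>m\<in>Poly_Mapping.keys p. \<Sum>m'\<in>Poly_Mapping.keys q.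
       Poly_Mapping.single (m + m') ((emb (Poly_Mapping.lookup p m) * monomial_value c m) *
         (emb (Poly_Mapping.lookup q m') * monomial_value c m')))"
    by (simp only: scale_vars_eq_sum[of c p] scale_vars_eq_sum[of c q] sum_product mult_single)
  ultimately show ?thesis
    by (simp add: monomial_value_add emb_mult mult_ac)
qed

lemma scale_vars_1 [simp]: "scale_vars c 1 = 1"
  using scale_vars_single[of c 0 1] by (simp add: single_one)

lemma scale_vars_prod: "scale_vars c (prod f A) = (\<Prod>x\<in>A. scale_vars c (f x))"
  by (induction A rule: infinite_finite_induct) (auto simp: scale_vars_mult)

lemma scale_vars_power: "scale_vars c (p ^ n) = scale_vars c p ^ n"
  by (induction n) (auto simp: scale_vars_mult)

lemma scale_vars_mconst: "scale_vars c (mconst a) = mconst (emb a)"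
  by (simp add: mconst_def scale_vars_single)

lemma mconst_mult: "mconst a * mconst b = mconst (a * b)"
  by (simp add: mconst_def mult_single)

lemma scale_vars_mvar: "scale_vars c (mvar j) = mconst (c j) * mvar j"
  unfolding mvar_def mconst_def scale_vars_single monomial_value_single by (simp add: mult_single)

lemma scale_vars_lin_change:
  "scale_vars c (lin_change h p) = lin_change (\<chi> i j. emb (h $ i $ j) * c j) (Poly_Mapping.map emb p)"
proof -
  have "scale_vars c (msubst s p) = msubst (\<lambda>i. scale_vars c (s i)) (Poly_Mapping.map emb p)" for s
    by (simp add: msubst_def keys_map_emb lookup_map_emb scale_vars_sum scale_vars_mult
        scale_vars_mconst scale_vars_prod scale_vars_power)
  then show ?thesis
    unfolding lin_change_def
    by (simp only: scale_vars_sum scale_vars_mult scale_vars_mconst scale_vars_mvar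
        mult.assoc[symmetric] mconst_mult vec_lambda_beta)
qed

lemma lookup_scale_vars_one_parameter:
  fixes p :: "('n::finite, 'k::field) mpoly"
  assumes pos: "\<And>m. m \<in> Poly_Mapping.keys p \<Longrightarrow> 0 < weight w m"
  obtains Q where
    "\<And>m. Poly_Mapping.lookup (scale_vars (\<lambda>j. emb (\<kappa> j) * to_fract [:0, 1:] powi w j) p) m = to_fract (Q m)"
    "\<And>m. poly (Q m) 0 = 0"
proof -
  define t :: "'k ratfun" where "t = to_fract [:0, 1:]"
  define Q where "Q m = [:Poly_Mapping.lookup p m:] * [:monomial_value \<kappa> m:] * [:0, 1:] ^ nat (weight w m)" for m
  have "t \<noteq> 0"
    by (simp add: t_def)
  have "Poly_Mapping.lookup (scale_vars (\<lambda>j. emb (\<kappa> j) * t powi w j) p) m = to_fract (Q m)" for m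
  proof (cases "Poly_Mapping.lookup p m = 0")
    case True
    then show ?thesis
      by (simp add: lookup_scale_vars Q_def)
  next
    case False
    then have "t powi weight w m = t ^ nat (weight w m)"
      using pos by (metis in_keys_iff int_nat_eq less_le power_int_of_nat)
    then have "Poly_Mapping.lookup (scale_vars (\<lambda>j. emb (\<kappa> j) * t powi w j) p) m =
        emb (Poly_Mapping.lookup p m) * (emb (monomial_value \<kappa> m) * t ^ nat (weight w m))"
      by (simp only: lookup_scale_vars monomial_value_one_parameter[OF \<open>t \<noteq> 0\<close>])
    then show ?thesis
      by (simp only: Q_def t_def emb_eq_to_fract to_fract_mult to_fract_power mult.assoc)
  qed
  moreover have "poly (Q m) 0 = 0" for m
    using pos[of m] by (cases "Poly_Mapping.lookup p m = 0") (auto simp: Q_def in_keys_iff zero_power)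
  ultimately show ?thesis
    using that unfolding t_def by blast
qed

section \<open>Destabilizing one-parameter subgroups\<close>

lemma det_one_parameter_subgroup:
  fixes h :: "'k::field ^ 'n::finite ^ 'n"
  assumes "(\<Prod>j\<in>UNIV. \<kappa> j) * det h = 1" "t \<noteq> 0" "(\<Sum>j\<in>UNIV. w j) = 0"
  shows "det (\<chi> i j. emb (h $ i $ j) * (emb (\<kappa> j) * t powi w j)) = 1"
proof -
  have "(\<Prod>j\<in>UNIV. emb (\<kappa> j) * t powi w j) = emb (\<Prod>j\<in>UNIV. \<kappa> j) * t powi (\<Sum>j\<in>UNIV. w j)"
    by (simp only: prod.distrib emb_prod prod_power_int[OF assms(2)])
  then show ?thesis
    using assms by (simp add: det_map_emb_mult_columns mult.commute flip: emb_mult)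
qed

lemma not_GIT_semistable_if_positive_weights:
  fixes f :: "('n::finite, 'k::field) mpoly" and h :: "'k ^ 'n ^ 'n" and w :: "'n \<Rightarrow> int"
  assumes f: "homogeneous D f" and h: "det h \<noteq> 0" and w: "(\<Sum>j\<in>UNIV. w j) = 0"
    and pos: "\<And>m. m \<in> Poly_Mapping.keys (lin_change h f) \<Longrightarrow> 0 < weight w m"
  shows "\<not> GIT_semistable D f"
proof
  assume "GIT_semistable D f"
  then obtain F e where F: "0 < e" "homogeneous e F" "SL_invariant D F"
    and nonzero: "eval_coeff F (Poly_Mapping.lookup (Poly_Mapping.map emb f)) \<noteq> 0"
    unfolding GIT_semistable_def by blast
  define t :: "'k ratfun" where "t = to_fract [:0, 1:]"
  define \<kappa> :: "'n \<Rightarrow> 'k" where "\<kappa> j = (if j = undefined then inverse (det h) else 1)" for j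
  define c where "c j = emb (\<kappa> j) * t powi w j" for j
  define g where "g = (\<chi> i j. emb (h $ i $ j) * c j)"
  have "(\<Prod>j\<in>UNIV. \<kappa> j) * det h = 1"
    using h by (simp add: \<kappa>_def)
  then have "det g = 1"
    unfolding g_def c_def by (rule det_one_parameter_subgroup) (simp_all add: t_def w)
  moreover have "homogeneous D (Poly_Mapping.map emb f)"
    using f by (simp add: homogeneous_def keys_map_emb)
  ultimately have "eval_coeff F (Poly_Mapping.lookup (lin_change g (Poly_Mapping.map emb f))) =
      eval_coeff F (Poly_Mapping.lookup (Poly_Mapping.map emb f))"
    using F(3) unfolding SL_invariant_def by blast
  moreover have "lin_change g (Poly_Mapping.map emb f) = scale_vars c (lin_change h f)"
    by (simp add: g_def scale_vars_lin_change)
  ultimately have invariant: "eval_coeff F (Poly_Mapping.lookup (scale_vars c (lin_change h f))) =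
      eval_coeff F (Poly_Mapping.lookup (Poly_Mapping.map emb f))"
    by simp
  obtain Q where "\<And>m. Poly_Mapping.lookup (scale_vars c (lin_change h f)) m = to_fract (Q m)"
      "\<And>m. poly (Q m) 0 = 0"
    using lookup_scale_vars_one_parameter[where \<kappa> = \<kappa>, OF pos] unfolding c_def t_def by blast
  then obtain R where R: "eval_coeff F (Poly_Mapping.lookup (scale_vars c (lin_change h f))) = to_fract R"
      "poly R 0 = 0"
    using eval_coeff_vanishing_at_0[OF F(2,1)] by blast
  define v where "v = (\<Sum>\<mu>\<in>Poly_Mapping.keys F. Poly_Mapping.lookup F \<mu> *
     (\<Prod>m\<in>Poly_Mapping.keys \<mu>. Poly_Mapping.lookup f m ^ Poly_Mapping.lookup \<mu> m))"
  have "Poly_Mapping.lookup (Poly_Mapping.map emb f) = (\<lambda>m. emb (Poly_Mapping.lookup f m))"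
    by (simp add: lookup_map_emb fun_eq_iff)
  then have F_at_f: "eval_coeff F (Poly_Mapping.lookup (Poly_Mapping.map emb f)) = emb v"
    by (simp only: eval_coeff_map_emb v_def)
  with invariant R(1) have "R = [:v:]"
    by (simp add: emb_eq_to_fract)
  with R(2) F_at_f nonzero show False
    by simp
qed

section \<open>LDS forms\<close>

lemma keys_mvar_mult_pderiv_var:
  assumes "m \<in> Poly_Mapping.keys (mvar x * pderiv_var y H :: ('n, 'a::comm_ring_1) mpoly)"
  obtains m0 where "m0 \<in> Poly_Mapping.keys H" "Poly_Mapping.lookup m0 y \<noteq> 0"
    "m = Poly_Mapping.single x 1 + (m0 - Poly_Mapping.single y 1)"
proof -
  have "Poly_Mapping.keys (mvar x * pderiv_var y H) \<subseteq>
      {Poly_Mapping.single x 1 + b | b. b \<in> Poly_Mapping.keys (pderiv_var y H)}"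
    using keys_mult[of "mvar x" "pderiv_var y H"] by (simp add: mvar_def)
  then obtain b where m: "m = Poly_Mapping.single x 1 + b" and b: "b \<in> Poly_Mapping.keys (pderiv_var y H)"
    using assms by blast
  have "b \<in> (\<Union>m0\<in>Poly_Mapping.keys H. Poly_Mapping.keys (Poly_Mapping.single
      (m0 - Poly_Mapping.single y 1) (of_nat (Poly_Mapping.lookup m0 y) * Poly_Mapping.lookup H m0)))"
    using b unfolding pderiv_var_def by (rule subsetD[OF keys_sum])
  then obtain m0 where m0: "m0 \<in> Poly_Mapping.keys H"
    and "b \<in> Poly_Mapping.keys (Poly_Mapping.single (m0 - Poly_Mapping.single y 1)
      (of_nat (Poly_Mapping.lookup m0 y) * Poly_Mapping.lookup H m0))"
    by blast
  then have "b = m0 - Poly_Mapping.single y 1" "Poly_Mapping.lookup m0 y \<noteq> 0"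
    by (auto split: if_splits intro: gr0I)
  with that m0 m show ?thesis
    by blast
qed

lemma weight_mvar_mult_pderiv_var:
  fixes H :: "('n::finite, 'a::comm_ring_1) mpoly"
  assumes "m \<in> Poly_Mapping.keys (mvar x * pderiv_var y H)"
    and "homogeneous D H" "vars_in S H" "\<And>j. j \<in> S \<Longrightarrow> w j = b"
  shows "weight w m = w x + b * int D - w y"
proof -
  obtain m0 where m0: "m0 \<in> Poly_Mapping.keys H" "Poly_Mapping.lookup m0 y \<noteq> 0"
    and m: "m = Poly_Mapping.single x 1 + (m0 - Poly_Mapping.single y 1)"
    using keys_mvar_mult_pderiv_var[OF assms(1)] .
  have "weight w m0 = b * int D"
    using assms(2-4) m0(1) weight_eq_mult_mdeg[of m0 S w b]
    by (simp add: homogeneous_def vars_in_def)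
  then show ?thesis
    unfolding m weight_add weight_single weight_minus_single[OF m0(2)] by simp
qed

text \<open>The weights on x_1, \<dots>, x_n; since d \<ge> 2, each x_i \<partial>H/\<partial>x_(l+i) has weight
  (2l - 2n) + n(d + 1) - n > 0, and G only involves variables of positive weight.\<close>

definition lds_weight :: "nat \<Rightarrow> nat \<Rightarrow> nat \<Rightarrow> int" where
  "lds_weight n l i = (if i < l then 2 * int l - 2 * int n else if i < 2 * l then int n else int l)"

lemma sum_lds_weight:
  assumes "2 * l \<le> n"
  shows "(\<Sum>i<n. lds_weight n l i) = 0"
proof -
  have "(\<Sum>i<n. lds_weight n l i) =
      (\<Sum>i\<in>{0..<l}. lds_weight n l i) + (\<Sum>i\<in>{l..<2 * l}. lds_weight n l i) + (\<Sum>i\<in>{2 * l..<n}. lds_weight n l i)"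
    using assms sum.atLeastLessThan_concat[of 0 l "2 * l" "lds_weight n l"]
      sum.atLeastLessThan_concat[of 0 "2 * l" n "lds_weight n l"]
    by (simp add: atLeast0LessThan)
  also have "\<dots> = int l * (2 * int l - 2 * int n) + int l * int n + int (n - 2 * l) * int l"
    by (simp add: lds_weight_def)
  finally show ?thesis
    using assms by (simp add: of_nat_diff algebra_simps)
qed

lemma LDS_positive_weights:
  fixes f :: "('n::finite, 'k::field) mpoly"
  assumes "LDS (d + 1) f" "2 \<le> d"
  obtains h :: "'k ^ 'n ^ 'n" and w where "det h \<noteq> 0" "(\<Sum>j\<in>UNIV. w j) = 0"
    "\<And>m. m \<in> Poly_Mapping.keys (lin_change h f) \<Longrightarrow> 0 < weight w m"
proof -
  from assms(1) obtain h :: "'k ^ 'n ^ 'n" and e :: "nat \<Rightarrow> 'n" and l H G where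
    h: "det h \<noteq> 0" and e: "bij_betw e {..<CARD('n)} UNIV" and l: "1 \<le> l" "2 * l \<le> CARD('n)"
    and H: "homogeneous (d + 1) H" "vars_in (e ` {l..<2*l}) H"
    and G: "homogeneous (d + 1) G" "vars_in (e ` {l..<CARD('n)}) G"
    and f: "lin_change h f = (\<Sum>i<l. mvar (e i) * pderiv_var (e (l + i)) H) + G"
    unfolding LDS_def by blast
  define n where "n = CARD('n)"
  define w where "w j = lds_weight n l (inv_into {..<n} e j)" for j
  have w_e: "w (e i) = lds_weight n l i" if "i < n" for i
    using bij_betw_inv_into_left[OF e] that by (simp add: w_def n_def)
  have "(\<Sum>j\<in>UNIV. w j) = (\<Sum>i<n. lds_weight n l i)"
    using sum.reindex_bij_betw[OF e, of w] w_e by (simp add: n_def)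
  also have "\<dots> = 0"
    using l(2) by (simp add: sum_lds_weight n_def)
  finally have sum_w: "(\<Sum>j\<in>UNIV. w j) = 0" .
  have "0 < weight w m" if m: "m \<in> Poly_Mapping.keys (lin_change h f)" for m
  proof -
    consider i where "i < l" "m \<in> Poly_Mapping.keys (mvar (e i) * pderiv_var (e (l + i)) H)"
      | "m \<in> Poly_Mapping.keys G"
      using m keys_add[of "\<Sum>i<l. mvar (e i) * pderiv_var (e (l + i)) H" G]
        keys_sum[of "\<lambda>i. mvar (e i) * pderiv_var (e (l + i)) H" "{..<l}"]
      unfolding f by blast
    then show ?thesis
    proof cases
      case (1 i)
      have "w j = int n" if "j \<in> e ` {l..<2*l}" for j
        using that l(2) w_e by (auto simp: lds_weight_def n_def)
      then have "weight w m = w (e i) + int n * int (d + 1) - w (e (l + i))"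
        using weight_mvar_mult_pderiv_var[OF 1(2) H] by blast
      also have "\<dots> = 2 * int l + int n * (int d - 2)"
        using 1(1) l(2) w_e[of i] w_e[of "l + i"] by (simp add: lds_weight_def n_def algebra_simps)
      finally show ?thesis
        using l(1) assms(2) by (simp add: add_pos_nonneg)
    next
      case 2
      have "1 \<le> w j" if "j \<in> e ` {l..<n}" for j
        using that l w_e by (auto simp: lds_weight_def n_def)
      then have "int (mdeg m) \<le> weight w m"
        using G(2) 2 by (intro mdeg_le_weight[of m "e ` {l..<n}"]) (auto simp: vars_in_def n_def)
      moreover have "mdeg m = d + 1"
        using G(1) 2 by (simp add: homogeneous_def)
      ultimately show ?thesis
        by simp
    qed
  qed
  with h sum_w that show ?thesis
    by blast
qed

theorem lemma1p4:
  fixes f :: "('n::finite, 'k::field) mpoly" and d :: nat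
  assumes "d + 1 \<ge> 3"
    and "homogeneous (d + 1) f"
    and "LDS (d + 1) f"
  shows "\<not> GIT_semistable (d + 1) f"
proof -
  obtain h :: "'k ^ 'n ^ 'n" and w where "det h \<noteq> 0" "(\<Sum>j\<in>UNIV. w j) = 0"
    "\<And>m. m \<in> Poly_Mapping.keys (lin_change h f) \<Longrightarrow> 0 < weight w m"
    using LDS_positive_weights[OF assms(3)] assms(1) by auto
  then show ?thesis
    using not_GIT_semistable_if_positive_weights[OF assms(2)] by blast
qed

end
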